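(* Let $N \ge 1$ and let $W_N$ be the set of binary words of length $N$. Define $\varphi_7 : W_N \to W_N$ by $\varphi_7(u) = v\, 1010110\, v'$ if $u = v\, 0110110\, v'$ where $v, v'$ are (possibly empty) words such that $v0110$ does not contain $0110110$ as a contiguous subword; and $\varphi_7(u) = u$ otherwise. Then $|P(\varphi_7(u))| \leq |P(u)|$ for every $u \in W_N$.
   Context: Juxtaposition denotes concatenation. For a binary word $w = w_1 \cdots w_\ell$ of length $\ell$, $P(w)$ is the set of indices $i \geq 2$ such that at least one of the following holds: (i) $\ell \geq i$ and $w_{i-1} w_i = 00$; (ii) $\ell \geq i+2$ and $w_{i-1} w_i w_{i+1} w_{i+2} = 0100$; (iii) $\ell \geq i+3$ and $w_{i-1} \cdots w_{i+3} = 01010$. *)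

theory Defs
  imports Main "HOL-Library.Sublist"
begin

text \<open>Binary words are lists over {0,1} (as naturals); letters are 1-indexed in
the paper: w_j = w ! (j - 1).\<close>

definition W :: "nat \<Rightarrow> nat list set" where
  "W N = {w. length w = N \<and> set w \<subseteq> {0, 1}}"

definition P :: "nat list \<Rightarrow> nat set" where
  "P w = {i. 2 \<le> i \<and>
     ((length w \<ge> i \<and> w ! (i - 2) = 0 \<and> w ! (i - 1) = 0)
    \<or> (length w \<ge> i + 2 \<and> w ! (i - 2) = 0 \<and> w ! (i - 1) = 1 \<and> w ! i = 0 \<and> w ! (i + 1) = 0)
    \<or> (length w \<ge> i + 3 \<and> w ! (i - 2) = 0 \<and> w ! (i - 1) = 1 \<and> w ! i = 0 \<and> w ! (i + 1) = 1
         \<and> w ! (i + 2) = 0))}"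

definition phi7_cond :: "nat list \<Rightarrow> nat list \<Rightarrow> nat list \<Rightarrow> bool" where
  "phi7_cond u v v' \<longleftrightarrow> u = v @ [0,1,1,0,1,1,0] @ v' \<and>
      \<not> sublist [0,1,1,0,1,1,0] (v @ [0,1,1,0])"

definition phi7 :: "nat list \<Rightarrow> nat list" where
  "phi7 u = (if \<exists>v v'. phi7_cond u v v'
             then (let (v, v') = (SOME p. phi7_cond u (fst p) (snd p)) in v @ [1,0,1,0,1,1,0] @ v')
             else u)"

end

theory Submission
  imports Defs
begin

text \<open>The map \<open>\<phi>\<^sub>7\<close> only turns the letters \<open>01\<close> at the start of an occurrence of
\<open>0110110\<close> into \<open>10\<close>, followed by \<open>10110\<close> in both words. Whether an index belongs to \<open>P\<close>
depends only on the letters within distance two of it, so only the indices next to the two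
changed letters can be affected, and for each of them a direct check shows that membership
in \<open>P\<close> of the image implies membership in \<open>P\<close> of the original word. Hence
\<open>P (\<phi>\<^sub>7 u) \<subseteq> P u\<close>, whatever the choice made by \<open>\<phi>\<^sub>7\<close>.\<close>

lemma finite_P: "finite (P w)"
  by (rule finite_subset[of _ "{..length w}"]) (auto simp: P_def)

lemma P_cong_window:
  assumes "length w1 = length w2"
    and "\<And>k. i - 2 \<le> k \<Longrightarrow> k \<le> i + 2 \<Longrightarrow> w1 ! k = w2 ! k"
  shows "i \<in> P w1 \<longleftrightarrow> i \<in> P w2"
  using assms by (simp add: P_def)

lemma P_swap_subset:
  assumes len: "length w1 = length w2" and bound: "a + 7 \<le> length w1"
    and same: "\<And>k. k \<noteq> a \<Longrightarrow> k \<noteq> a + 1 \<Longrightarrow> w1 ! k = w2 ! k"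
    and w1: "w1 ! a = 1" "w1 ! (a + 1) = 0" "w1 ! (a + 2) = 1" "w1 ! (a + 3) = 0"
      "w1 ! (a + 4) = 1" "w1 ! (a + 5) = 1" "w1 ! (a + 6) = 0"
    and w2: "w2 ! a = 0" "w2 ! (a + 1) = 1"
  shows "P w1 \<subseteq> P w2"
proof
  fix i assume i: "i \<in> P w1"
  then have "2 \<le> i" by (simp add: P_def)
  consider "i + 2 < a \<or> a + 3 < i" | "i + 2 = a" | "i + 1 = a" | "i = a" | "i = a + 1"
    | "i = a + 2" | "i = a + 3"
    by linarith
  then show "i \<in> P w2"
  proof cases
    case 1
    then show ?thesis using i P_cong_window[OF len, of i] same by force
  next
    case 2
    then show ?thesis using i len same \<open>2 \<le> i\<close> w1 by (auto simp: P_def)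
  next
    case 3
    then show ?thesis using i len same \<open>2 \<le> i\<close> w1 w2 by (auto simp: P_def)
  next
    case 4
    then show ?thesis using i len same \<open>2 \<le> i\<close> w1 w2 by (auto simp: P_def)
  next
    case 5
    then show ?thesis using i len same \<open>2 \<le> i\<close> w1 w2 by (auto simp: P_def)
  next
    case 6
    then show ?thesis using i len same bound w1 w2 by (auto simp: P_def add.commute)
  next
    case 7
    then show ?thesis using i len same bound w1 w2 by (auto simp: P_def add.commute)
  qed
qed

lemma P_replace_0110110_subset:
  "P (v @ [1,0,1,0,1,1,0] @ v') \<subseteq> P (v @ [0,1,1,0,1,1,0] @ v')"
proof (rule P_swap_subset[where a = "length v"])
  fix k assume "k \<noteq> length v" "k \<noteq> length v + 1"
  then show "(v @ [1,0,1,0,1,1,0] @ v') ! k = (v @ [0,1,1,0,1,1,0] @ v') ! k"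
    by (cases "k < length v") (auto simp: nth_append nth_Cons split: nat.splits)
qed (auto simp: nth_append)

lemma phi7_cases:
  obtains "phi7 u = u"
  | v v' where "u = v @ [0,1,1,0,1,1,0] @ v'" and "phi7 u = v @ [1,0,1,0,1,1,0] @ v'"
proof (cases "\<exists>v v'. phi7_cond u v v'")
  case True
  define p where "p = (SOME p. phi7_cond u (fst p) (snd p))"
  from True have "phi7_cond u (fst p) (snd p)"
    unfolding p_def by (metis (mono_tags, lifting) fst_conv snd_conv someI)
  moreover from True have "phi7 u = fst p @ [1,0,1,0,1,1,0] @ snd p"
    unfolding phi7_def p_def[symmetric] by (simp add: case_prod_beta)
  ultimately show ?thesis using that(2) by (simp add: phi7_cond_def)
next
  case False
  then show ?thesis using that(1) by (simp add: phi7_def)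
qed

lemma P_phi7_subset: "P (phi7 u) \<subseteq> P u"
proof (cases u rule: phi7_cases)
  case (2 v v')
  then show ?thesis using P_replace_0110110_subset[of v v'] by simp
qed simp

theorem lemma4p7:
  fixes N :: nat and u :: "nat list"
  assumes "N \<ge> 1" and "u \<in> W N"
  shows "card (P (phi7 u)) \<le> card (P u)"
  using finite_P P_phi7_subset by (rule card_mono)

end
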